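(* Let ${\bf x}_1,\dots,{\bf x}_N\in\mathbb{C}^d$ be samples such that the sample covariance $\widehat{\bf C}=\frac1N\sum_{n=1}^N{\bf x}_n{\bf x}_n^H$ is invertible, and write $\hat{\rm E}[g({\bf x})]=\frac1N\sum_{n=1}^N g({\bf x}_n)$. Let $\phi:\mathbb{C}\to\mathbb{C}$ be any function and ${\bf w}\in\mathbb{C}^d\setminus\{{\bf 0}\}$. Put $\hat s_n={\bf w}^H{\bf x}_n$, $\hat\sigma=\sqrt{{\bf w}^H\widehat{\bf C}{\bf w}}$, ${\bf a}=\widehat{\bf C}{\bf w}/\hat\sigma^2$, $$\hat\nu=\hat{\rm E}\Big[\phi\Big(\frac{\hat s}{\hat\sigma}\Big)\frac{\hat s}{\hat\sigma}\Big],\qquad \nabla={\bf a}-\hat\nu^{-1}\hat{\rm E}\Big[\phi\Big(\frac{\hat s}{\hat\sigma}\Big)\frac{{\bf x}}{\hat\sigma}\Big],$$ and assume $\hat\nu\ne 0$. Then for every real $\lambda\neq1$ the matrix $\frac{\widehat{\bf C}}{\hat\sigma^2}-\lambda{\bf a}{\bf a}^H$ is invertible and $$\lim_{\lambda\to1}\Big(\frac{\widehat{\bf C}}{\hat\sigma^2}-\lambda{\bf a}{\bf a}^H\Big)^{-1}\nabla=\hat\sigma^2\,\widehat{\bf C}^{-1}\nabla.$$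
   Context: Here $\hat s=\hat s({\bf x})={\bf w}^H{\bf x}$ inside $\hat{\rm E}$. The vector ${\bf a}$ is the mixing vector linked to the separating vector ${\bf w}$ through the orthogonal constraint, and $\nabla$ is the normalized gradient used in one-unit FastDIVA; the matrix $\frac{\widehat{\bf C}}{\hat\sigma^2}-{\bf a}{\bf a}^H$ (the case $\lambda=1$) is rank deficient. *)

theory Defs
  imports "HOL-Analysis.Analysis"
begin

definition hdot :: "complex^'d \<Rightarrow> complex^'d \<Rightarrow> complex" where
  "hdot w x = (\<Sum>i\<in>UNIV. cnj (w $ i) * x $ i)"

definition houter :: "complex^'d \<Rightarrow> complex^'d \<Rightarrow> complex^'d^'d" where
  "houter a b = (\<chi> i j. a $ i * cnj (b $ j))"

text \<open>Sample covariance (1/N) sum_{n=1}^N x_n x_n^H, samples indexed by n < N.\<close>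
definition sample_cov :: "nat \<Rightarrow> (nat \<Rightarrow> complex^'d) \<Rightarrow> complex^'d^'d" where
  "sample_cov N x = (\<chi> i j. (\<Sum>n<N. x n $ i * cnj (x n $ j)) / of_nat N)"

definition emp_mean :: "nat \<Rightarrow> (nat \<Rightarrow> 'b) \<Rightarrow> ('b \<Rightarrow> 'c::real_vector) \<Rightarrow> 'c" where
  "emp_mean N x g = (1 / real N) *\<^sub>R (\<Sum>n<N. g (x n))"

end

theory Submission
  imports Defs
begin

text \<open>Write \<open>A = C / \<sigma>\<^sup>2\<close>, so that \<open>a = A w\<close> and \<open>a\<^sup>H w = w\<^sup>H A w = 1\<close>. A rank-one update
  \<open>A - \<lambda> a a\<^sup>H\<close> of an invertible matrix is singular only if \<open>\<lambda> a\<^sup>H A\<^sup>-\<^sup>1 a = \<lambda> a\<^sup>H w = 1\<close>, which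
  gives invertibility for \<open>\<lambda> \<noteq> 1\<close>. Moreover \<open>w\<^sup>H \<nabla> = 0\<close> by the choice of \<open>\<nu>\<close>, so
  \<open>v = \<sigma>\<^sup>2 C\<^sup>-\<^sup>1 \<nabla> = A\<^sup>-\<^sup>1 \<nabla>\<close> satisfies \<open>a\<^sup>H v = w\<^sup>H A v = 0\<close>; hence \<open>(A - \<lambda> a a\<^sup>H) v = \<nabla>\<close> and the
  function whose limit is taken is constantly \<open>v\<close> away from \<open>\<lambda> = 1\<close>.\<close>

lemma matrix_inv:
  fixes A :: "'a::semiring_1^'n^'m"
  assumes "invertible A"
  shows "A ** matrix_inv A = mat 1" and "matrix_inv A ** A = mat 1"
  using someI_ex[OF assms[unfolded invertible_def]] unfolding matrix_inv_def by auto

lemma matrix_inv_mult_vec_cancel: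
  fixes A :: "'a::comm_semiring_1^'n^'n"
  assumes "invertible A"
  shows "matrix_inv A *v (A *v v) = v" and "A *v (matrix_inv A *v v) = v"
  by (simp_all add: matrix_vector_mul_assoc matrix_inv[OF assms])

lemma invertible_iff_trivial_kernel:
  fixes A :: "'a::field^'n^'n"
  shows "invertible A \<longleftrightarrow> (\<forall>y. A *v y = 0 \<longrightarrow> y = 0)"
  using invertible_left_inverse matrix_left_invertible_ker by blast

lemma matrix_vector_mult_entrywise_divide:
  fixes A :: "'a::field^'n^'m"
  shows "(\<chi> i j. A $ i $ j / k) *v y = (1 / k) *s (A *v y)"
  by (simp add: vec_eq_iff matrix_vector_mult_def sum_divide_distrib)

lemma invertible_entrywise_divide:
  fixes A :: "'a::field^'n^'n"
  assumes "invertible A" and "k \<noteq> 0"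
  shows "invertible (\<chi> i j. A $ i $ j / k)"
  using assms by (simp add: invertible_iff_trivial_kernel matrix_vector_mult_entrywise_divide)

lemma hdot_diff_right: "hdot w (u - v) = hdot w u - hdot w v"
  by (simp add: hdot_def right_diff_distrib sum_subtractf)

lemma hdot_scale_right: "hdot w (c *s v) = c * hdot w v"
  by (simp add: hdot_def sum_distrib_left algebra_simps)

lemma hdot_scaleR_right: "hdot w (r *\<^sub>R v) = complex_of_real r * hdot w v"
proof -
  have "r *\<^sub>R v = complex_of_real r *s v"
    by (simp only: vec_eq_iff vector_scaleR_component vector_smult_component)
      (simp add: scaleR_conv_of_real)
  then show ?thesis by (simp add: hdot_scale_right)
qed

lemma hdot_sum_right: "hdot w (\<Sum>n\<in>S. f n) = (\<Sum>n\<in>S. hdot w (f n))"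
  by (simp add: hdot_def sum_component sum_distrib_left) (rule sum.swap)

lemma hdot_emp_mean_right: "hdot w (emp_mean N x g) = emp_mean N x (\<lambda>y. hdot w (g y))"
  unfolding emp_mean_def by (simp only: hdot_scaleR_right hdot_sum_right) (simp add: scaleR_conv_of_real)

lemma cnj_hdot: "cnj (hdot u v) = hdot v u"
  by (simp add: hdot_def mult.commute)

definition hermitian :: "complex^'n^'n \<Rightarrow> bool" where
  "hermitian A \<longleftrightarrow> (\<forall>i j. cnj (A $ i $ j) = A $ j $ i)"

lemma hdot_hermitian:
  assumes "hermitian A"
  shows "hdot (A *v u) v = hdot u (A *v v)"
proof -
  have "hdot (A *v u) v = (\<Sum>i\<in>UNIV. \<Sum>j\<in>UNIV. A $ j $ i * cnj (u $ j) * v $ i)"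
    using assms unfolding hermitian_def
    by (simp add: hdot_def matrix_vector_mult_def sum_distrib_right sum_distrib_left mult_ac)
  also have "\<dots> = (\<Sum>j\<in>UNIV. \<Sum>i\<in>UNIV. cnj (u $ j) * (A $ j $ i * v $ i))"
    by (subst sum.swap) (simp add: mult_ac)
  also have "\<dots> = hdot u (A *v v)"
    by (simp add: hdot_def matrix_vector_mult_def sum_distrib_left)
  finally show ?thesis .
qed

lemma hermitian_entrywise_divide_real:
  "hermitian A \<Longrightarrow> hermitian (\<chi> i j. A $ i $ j / complex_of_real r)"
  by (simp add: hermitian_def)

lemma hermitian_sample_cov: "hermitian (sample_cov N x)"
  by (simp add: hermitian_def sample_cov_def mult.commute)

lemma sample_cov_mult_vec:
  "sample_cov N x *v v = (1 / of_nat N) *s (\<Sum>n<N. hdot (x n) v *s x n)"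
proof -
  have "(sample_cov N x *v v) $ i = (\<Sum>n<N. \<Sum>j\<in>UNIV. x n $ i * cnj (x n $ j) * v $ j / of_nat N)" for i
    by (simp add: matrix_vector_mult_def sample_cov_def sum_divide_distrib sum_distrib_right)
      (rule sum.swap)
  then show ?thesis
    by (simp add: vec_eq_iff sum_component hdot_def sum_distrib_left sum_divide_distrib mult_ac)
qed

lemma hdot_sample_cov_self:
  "hdot w (sample_cov N x *v w) = complex_of_real ((\<Sum>n<N. (cmod (hdot (x n) w))\<^sup>2) / real N)"
proof -
  have "hdot (x n) w * hdot w (x n) = complex_of_real ((cmod (hdot (x n) w))\<^sup>2)" for n
    by (metis cnj_hdot complex_norm_square)
  then show ?thesis
    by (simp add: sample_cov_mult_vec hdot_scale_right hdot_sum_right del: of_real_power)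
qed

lemma sample_cov_positive_definite:
  assumes "invertible (sample_cov N x)" and "w \<noteq> 0"
  shows "0 < Re (hdot w (sample_cov N x *v w))"
proof (rule ccontr)
  assume "\<not> ?thesis"
  then have "(\<Sum>n<N. (cmod (hdot (x n) w))\<^sup>2) / real N \<le> 0"
    by (simp add: hdot_sample_cov_self)
  then have "N = 0 \<or> (\<forall>n<N. hdot (x n) w = 0)"
    by (auto simp: divide_le_0_iff not_le sum_nonneg_eq_0_iff
        dest: antisym[OF _ sum_nonneg[of "{..<N}" "\<lambda>n. (cmod (hdot (x n) w))\<^sup>2"]])
  then have "sample_cov N x *v w = 0"
    by (auto simp: sample_cov_mult_vec)
  then show False
    using assms by (simp add: invertible_iff_trivial_kernel)
qed

definition rank_one_update :: "complex^'n^'n \<Rightarrow> complex \<Rightarrow> complex^'n \<Rightarrow> complex^'n \<Rightarrow> complex^'n^'n" where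
  "rank_one_update A t b c = (\<chi> i j. A $ i $ j - t * houter b c $ i $ j)"

lemma rank_one_update_mult_vec:
  "rank_one_update A t b c *v y = A *v y - (t * hdot c y) *s b"
  by (simp add: vec_eq_iff rank_one_update_def matrix_vector_mult_def houter_def hdot_def
      sum_subtractf sum_distrib_left algebra_simps)

lemma invertible_rank_one_update:
  assumes "invertible A" and "A *v u = b" and "t * hdot c u \<noteq> 1"
  shows "invertible (rank_one_update A t b c)"
  unfolding invertible_iff_trivial_kernel
proof (intro allI impI)
  fix y
  assume "rank_one_update A t b c *v y = 0"
  then have "A *v y = A *v ((t * hdot c y) *s u)"
    using assms(2) by (simp add: rank_one_update_mult_vec vector_scalar_commute)
  then have y: "y = (t * hdot c y) *s u"
    using inj_matrix_vector_mult[OF assms(1)] by (simp add: inj_eq)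
  then have "hdot c y = t * hdot c y * hdot c u"
    by (metis hdot_scale_right)
  then have "hdot c y * (1 - t * hdot c u) = 0"
    by (simp add: algebra_simps)
  then show "y = 0"
    using assms(3) y by simp
qed

lemma rank_one_update_inverse_mult_vec:
  assumes "invertible (rank_one_update A t b c)" and "hdot c v = 0"
  shows "matrix_inv (rank_one_update A t b c) *v (A *v v) = v"
  using matrix_inv_mult_vec_cancel(1)[OF assms(1), of v] assms(2)
  by (simp add: rank_one_update_mult_vec)

theorem proposition2:
  fixes N :: nat and x :: "nat \<Rightarrow> complex^'d" and \<phi> :: "complex \<Rightarrow> complex"
    and w :: "complex^'d"
  defines "C \<equiv> sample_cov N x"
  defines "\<sigma> \<equiv> sqrt (Re (hdot w (C *v w)))"
  defines "a \<equiv> (complex_of_real (1 / \<sigma>\<^sup>2)) *s (C *v w)"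
  defines "\<nu> \<equiv> emp_mean N x (\<lambda>y. \<phi> (hdot w y / complex_of_real \<sigma>) * (hdot w y / complex_of_real \<sigma>))"
  defines "grad \<equiv> a - (1 / \<nu>) *s emp_mean N x (\<lambda>y. \<phi> (hdot w y / complex_of_real \<sigma>) *s
                       ((1 / complex_of_real \<sigma>) *s y))"
  defines "M \<equiv> (\<lambda>t::real. (\<chi> i j. C $ i $ j / complex_of_real (\<sigma>\<^sup>2) - complex_of_real t * houter a a $ i $ j))"
  assumes "invertible C"
    and "w \<noteq> 0"
    and "\<nu> \<noteq> 0"
  shows "(\<forall>t::real. t \<noteq> 1 \<longrightarrow> invertible (M t)) \<and>
         ((\<lambda>t. matrix_inv (M t) *v grad) \<longlongrightarrow> complex_of_real (\<sigma>\<^sup>2) *s (matrix_inv C *v grad)) (at 1)"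
proof -
  define A where "A = (\<chi> i j. C $ i $ j / complex_of_real (\<sigma>\<^sup>2))"
  have "0 < Re (hdot w (C *v w))"
    using assms(7,8) unfolding C_def by (rule sample_cov_positive_definite)
  moreover have "hdot w (C *v w) = complex_of_real (Re (hdot w (C *v w)))"
    unfolding C_def hdot_sample_cov_self by simp
  ultimately have \<sigma>_pos: "0 < \<sigma>\<^sup>2" and wCw: "hdot w (C *v w) = complex_of_real (\<sigma>\<^sup>2)"
    unfolding \<sigma>_def by simp_all
  have A_mult: "A *v y = complex_of_real (1 / \<sigma>\<^sup>2) *s (C *v y)" for y
    unfolding A_def matrix_vector_mult_entrywise_divide by simp
  have A_herm: "hermitian A"
    unfolding A_def C_def by (intro hermitian_entrywise_divide_real hermitian_sample_cov)
  have A_inv: "invertible A"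
    unfolding A_def using assms(7) \<sigma>_pos by (simp add: invertible_entrywise_divide)
  have Aw: "A *v w = a"
    unfolding A_mult a_def ..
  have M_eq: "M t = rank_one_update A (complex_of_real t) a a" for t
    by (simp add: M_def A_def rank_one_update_def)
  have "hdot a w = hdot w (A *v w)"
    unfolding Aw[symmetric] by (rule hdot_hermitian[OF A_herm])
  also have "\<dots> = 1"
    using \<sigma>_pos by (simp add: A_mult hdot_scale_right wCw)
  finally have M_inv: "invertible (M t)" if "t \<noteq> 1" for t
    unfolding M_eq using that by (intro invertible_rank_one_update[OF A_inv Aw]) simp
  have "hdot w grad = 0"
    using \<sigma>_pos assms(9)
    by (simp add: grad_def hdot_diff_right hdot_scale_right hdot_emp_mean_right \<nu>_def
        a_def wCw)
  define v where "v = complex_of_real (\<sigma>\<^sup>2) *s (matrix_inv C *v grad)"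
  have Av: "A *v v = grad"
    using \<sigma>_pos
    by (simp add: v_def A_mult vector_scalar_commute matrix_inv_mult_vec_cancel(2)[OF assms(7)])
  then have av: "hdot a v = 0"
    using \<open>hdot w grad = 0\<close> by (simp add: Aw[symmetric] hdot_hermitian[OF A_herm])
  have "matrix_inv (M t) *v grad = v" if "t \<noteq> 1" for t
    using rank_one_update_inverse_mult_vec[OF M_inv[OF that, unfolded M_eq] av]
    by (simp add: M_eq Av)
  then have "((\<lambda>t. matrix_inv (M t) *v grad) \<longlongrightarrow> v) (at 1)"
    by (intro Lim_transform_eventually[OF tendsto_const]) (simp add: eventually_at_filter)
  with M_inv show ?thesis
    by (simp add: v_def)
qed

end
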